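(* Let $M\ge\frac52$, $\mu=\frac{2}{2M+3}$, and consider Algorithm A run on an input whose optimal offline makespan is $1$. Then for every $j\ge1$, the load of $m_1$ just after job $j$ has been handled is at most $1+\mu$.
   Context: Model (two hierarchical machines with migration, bin stretching). Jobs $1,2,\dots,n$ arrive one by one ($n$ unknown in advance). Job $j$ has a size $p_j>0$ and a grade of service (GoS) $g_j\in\{1,2\}$; a job of GoS $1$ may only be processed on machine $m_1$, a job of GoS $2$ may be processed on $m_1$ or on $m_2$. The load of a machine is the total size of the jobs assigned to it, and the makespan is the maximum load. When job $j$ arrives, the algorithm must assign it to a machine, and at the same time it may reassign (migrate) previously arrived jobs to other machines (respecting the GoS constraints), provided that the total size of the migrated jobs is at most $M\cdot p_j$; $M\ge 0$ is the migration factor. Bin stretching: the optimal offline makespan of the complete input is known in advance and scaled to $1$. Notation: $Y_{j}$ is the set of jobs on $m_2$ just after job $j$ has been handled (including migrations), $y_j$ its total size, $y_0=0$. $Z$ denotes the set of GoS-2 jobs currently on $m_1$. Algorithm A (with $\mu=\frac{2}{2M+3}$). On arrival of job $j$: (i) if $g_j=1$ or $y_{j-1}\ge 1-\mu$, assign $j$ to $m_1$; (ii) else if $y_{j-1}+p_j\le 1+\mu$, assign $j$ to $m_2$; (iii) otherwise, among all GoS-2 jobs arrived so far (the current $Z$, the current $Y_{j-1}$, and $j$), choose a subset $W$ of maximum total size subject to total size at most $1$; rearrange so that exactly the jobs of $W$ are on $m_2$ and all other arrived jobs are on $m_1$. *)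

theory Defs
  imports Complex_Main
begin

text \<open>Jobs are numbered 1..n; job i has size p i and grade of service g i (1 or 2).
  A machine assignment is described by the set S of jobs placed on m2.\<close>

definition load2 :: "(nat \<Rightarrow> real) \<Rightarrow> nat set \<Rightarrow> real" where
  "load2 p S = (\<Sum>i\<in>S. p i)"

definition load1 :: "(nat \<Rightarrow> real) \<Rightarrow> nat \<Rightarrow> nat set \<Rightarrow> real" where
  "load1 p j Y = (\<Sum>i\<in>{1..j} - Y. p i)"

definition feasible_assignment :: "(nat \<Rightarrow> nat) \<Rightarrow> nat \<Rightarrow> nat set \<Rightarrow> bool" where
  "feasible_assignment g n S \<longleftrightarrow> S \<subseteq> {i \<in> {1..n}. g i = 2}"

definition makespan :: "(nat \<Rightarrow> real) \<Rightarrow> nat \<Rightarrow> nat set \<Rightarrow> real" where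
  "makespan p n S = max (load1 p n S) (load2 p S)"

definition opt_makespan :: "(nat \<Rightarrow> real) \<Rightarrow> (nat \<Rightarrow> nat) \<Rightarrow> nat \<Rightarrow> real" where
  "opt_makespan p g n = Min (makespan p n ` {S. feasible_assignment g n S})"

definition mu :: "real \<Rightarrow> real" where
  "mu M = 2 / (2 * M + 3)"

text \<open>One step of Algorithm A: Y is Y_{j-1}, Y' is Y_j.  In step (iii) any subset W
  of maximum total size (subject to size at most 1) may be chosen.\<close>
definition algA_step ::
  "real \<Rightarrow> (nat \<Rightarrow> real) \<Rightarrow> (nat \<Rightarrow> nat) \<Rightarrow> nat \<Rightarrow> nat set \<Rightarrow> nat set \<Rightarrow> bool" where
  "algA_step M p g j Y Y' \<longleftrightarrow>
     (if g j = 1 \<or> load2 p Y \<ge> 1 - mu M then Y' = Y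
      else if load2 p Y + p j \<le> 1 + mu M then Y' = insert j Y
      else (Y' \<subseteq> {i \<in> {1..j}. g i = 2} \<and> load2 p Y' \<le> 1 \<and>
            (\<forall>W. W \<subseteq> {i \<in> {1..j}. g i = 2} \<and> load2 p W \<le> 1 \<longrightarrow> load2 p W \<le> load2 p Y')))"

definition algA_run ::
  "real \<Rightarrow> (nat \<Rightarrow> real) \<Rightarrow> (nat \<Rightarrow> nat) \<Rightarrow> nat \<Rightarrow> (nat \<Rightarrow> nat set) \<Rightarrow> bool" where
  "algA_run M p g n Y \<longleftrightarrow> Y 0 = {} \<and> (\<forall>j\<in>{1..n}. algA_step M p g j (Y (j - 1)) (Y j))"

end

theory Submission
  imports Defs
begin

text \<open>Fix an optimal schedule S, with both loads at most 1. As long as the load y of m2 stays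
  below 1 - \<mu>, the load of m1 never exceeds the load of m1 under S restricted to the jobs
  seen so far: GoS-1 jobs raise both by the same amount, a job put on m2 raises only the
  latter, and after a rearrangement in step (iii) m2 carries at least as much as S does on
  the GoS-2 jobs seen so far. Once y \<ge> 1 - \<mu>, the load of m1 is at most the total size,
  which is at most 2, minus 1 - \<mu>.\<close>

lemma load1_eq_sum_minus_load2:
  assumes "Y \<subseteq> {1..j}"
  shows "load1 p j Y = sum p {1..j} - load2 p Y"
  using assms unfolding load1_def load2_def by (simp add: sum_diff)

lemma load1_eq_sum_minus_load2_restrict:
  "load1 p j S = sum p {1..j} - load2 p (S \<inter> {1..j})"
proof -
  have "{1..j} - S = {1..j} - (S \<inter> {1..j})" by blast
  then show ?thesis
    using load1_eq_sum_minus_load2[of "S \<inter> {1..j}" j p] unfolding load1_def by simp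
qed

lemma load1_Suc_notin:
  assumes "Suc j \<notin> Y"
  shows "load1 p (Suc j) Y = load1 p j Y + p (Suc j)"
proof -
  have "{1..Suc j} - Y = insert (Suc j) ({1..j} - Y)" using assms by auto
  then show ?thesis unfolding load1_def by simp
qed

lemma load1_Suc_insert: "load1 p (Suc j) (insert (Suc j) Y) = load1 p j Y"
proof -
  have "{1..Suc j} - insert (Suc j) Y = {1..j} - Y" by auto
  then show ?thesis unfolding load1_def by simp
qed

lemma load1_mono:
  assumes "\<forall>i\<in>{1..n}. 0 \<le> p i" and "j \<le> n"
  shows "load1 p j S \<le> load1 p n S"
  unfolding load1_def by (rule sum_mono2) (use assms in auto)

lemma load2_mono:
  assumes "finite T" and "S \<subseteq> T" and "\<forall>i\<in>T. 0 \<le> p i"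
  shows "load2 p S \<le> load2 p T"
  unfolding load2_def by (rule sum_mono2) (use assms in auto)

lemma load1_le_if_load2_ge:
  assumes "Y \<subseteq> {1..j}" and "load2 p (S \<inter> {1..j}) \<le> load2 p Y"
  shows "load1 p j Y \<le> load1 p j S"
  using assms load1_eq_sum_minus_load2 load1_eq_sum_minus_load2_restrict by fastforce

lemma opt_makespan_attained:
  obtains S where "feasible_assignment g n S" and "makespan p n S = opt_makespan p g n"
proof -
  have F: "{S. feasible_assignment g n S} = Pow {i\<in>{1..n}. g i = 2}"
    by (auto simp: feasible_assignment_def)
  have "opt_makespan p g n \<in> makespan p n ` {S. feasible_assignment g n S}"
    unfolding opt_makespan_def by (rule Min_in) (auto simp: F)
  then show ?thesis using that by auto
qed

lemma algA_step_cases: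
  assumes step: "algA_step M p g j Y Y'" and gos: "g j \<in> {1, 2}"
  obtains (keep) "g j = 1 \<or> load2 p Y \<ge> 1 - mu M" "Y' = Y"
    | (put) "g j = 2" "load2 p Y < 1 - mu M" "Y' = insert j Y"
    | (rearrange) "Y' \<subseteq> {i\<in>{1..j}. g i = 2}"
        "\<forall>W. W \<subseteq> {i\<in>{1..j}. g i = 2} \<and> load2 p W \<le> 1 \<longrightarrow> load2 p W \<le> load2 p Y'"
proof (cases "g j = 1 \<or> load2 p Y \<ge> 1 - mu M")
  case True
  then show ?thesis using step keep unfolding algA_step_def by simp
next
  case False
  then have g2: "g j = 2" "load2 p Y < 1 - mu M" using gos by auto
  show ?thesis
  proof (cases "load2 p Y + p j \<le> 1 + mu M")
    case True
    then show ?thesis using step False g2 put unfolding algA_step_def by simp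
  next
    case False
    then show ?thesis using step \<open>\<not> (g j = 1 \<or> _)\<close> rearrange unfolding algA_step_def by simp
  qed
qed

lemma algA_step_subset:
  assumes "algA_step M p g (Suc j) Y Y'" and "Y \<subseteq> {i\<in>{1..j}. g i = 2}"
    and "g (Suc j) \<in> {1, 2}"
  shows "Y' \<subseteq> {i\<in>{1..Suc j}. g i = 2}"
  using assms(1,3) by (cases rule: algA_step_cases) (use assms(2) in auto)

lemma algA_step_load1_le:
  assumes step: "algA_step M p g (Suc j) Y Y'" and Y: "Y \<subseteq> {i\<in>{1..j}. g i = 2}"
    and IH: "load2 p Y < 1 - mu M \<longrightarrow> load1 p j Y \<le> load1 p j S"
    and S: "S \<subseteq> {i\<in>{1..n}. g i = 2}" "load2 p S \<le> 1"
    and nonneg: "\<forall>i\<in>{1..n}. 0 \<le> p i" and gos: "g (Suc j) \<in> {1, 2}" and "Suc j \<le> n"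
  shows "load2 p Y' < 1 - mu M \<longrightarrow> load1 p (Suc j) Y' \<le> load1 p (Suc j) S"
proof -
  have Suc_notin_Y: "Suc j \<notin> Y" using Y by auto
  have S_grows: "load1 p j S \<le> load1 p (Suc j) S"
    by (rule load1_mono) (use nonneg \<open>Suc j \<le> n\<close> in auto)
  from step gos show ?thesis
  proof (cases rule: algA_step_cases)
    case keep
    show ?thesis
    proof
      assume "load2 p Y' < 1 - mu M"
      then have "g (Suc j) = 1" "load2 p Y < 1 - mu M" using keep by auto
      moreover have "load1 p (Suc j) S = load1 p j S + p (Suc j)"
        by (rule load1_Suc_notin) (use S(1) \<open>g (Suc j) = 1\<close> in auto)
      ultimately show "load1 p (Suc j) Y' \<le> load1 p (Suc j) S"
        unfolding keep(2) using IH load1_Suc_notin[OF Suc_notin_Y, of p] by simp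
    qed
  next
    case put
    have "load1 p (Suc j) Y' = load1 p j Y" by (simp add: put(3) load1_Suc_insert)
    then show ?thesis using IH put(2) S_grows by auto
  next
    case rearrange
    have "finite S" using S(1) by (rule finite_subset) simp
    then have "load2 p (S \<inter> {1..Suc j}) \<le> load2 p S"
      by (rule load2_mono) (use S(1) nonneg in auto)
    moreover have "S \<inter> {1..Suc j} \<subseteq> {i\<in>{1..Suc j}. g i = 2}" using S(1) by auto
    ultimately have "load2 p (S \<inter> {1..Suc j}) \<le> load2 p Y'"
      using rearrange(2) S(2) by auto
    moreover have "Y' \<subseteq> {1..Suc j}" using rearrange(1) by auto
    ultimately show ?thesis using load1_le_if_load2_ge by blast
  qed
qed

lemma algA_run_invariant:
  assumes run: "algA_run M p g n Y" and S: "S \<subseteq> {i\<in>{1..n}. g i = 2}" "load2 p S \<le> 1"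
    and nonneg: "\<forall>i\<in>{1..n}. 0 \<le> p i" and gos: "\<forall>i\<in>{1..n}. g i \<in> {1, 2}"
  shows "j \<le> n \<Longrightarrow> Y j \<subseteq> {i\<in>{1..j}. g i = 2} \<and>
    (load2 p (Y j) < 1 - mu M \<longrightarrow> load1 p j (Y j) \<le> load1 p j S)"
proof (induction j)
  case 0
  then show ?case using run by (simp add: algA_run_def load1_def)
next
  case (Suc j)
  have "Suc j \<in> {1..n}" using Suc.prems by simp
  then have "algA_step M p g (Suc j) (Y (Suc j - 1)) (Y (Suc j))"
    using run unfolding algA_run_def by blast
  then have step: "algA_step M p g (Suc j) (Y j) (Y (Suc j))" by simp
  have gos_j: "g (Suc j) \<in> {1, 2}" using gos Suc.prems by simp
  have IH: "Y j \<subseteq> {i\<in>{1..j}. g i = 2}"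
    "load2 p (Y j) < 1 - mu M \<longrightarrow> load1 p j (Y j) \<le> load1 p j S"
    using Suc.IH Suc.prems by auto
  show ?case
    using algA_step_subset[OF step IH(1) gos_j]
      algA_step_load1_le[OF step IH S nonneg gos_j Suc.prems] by blast
qed

theorem mainTheorem3:
  fixes M :: real and p :: "nat \<Rightarrow> real" and g :: "nat \<Rightarrow> nat" and n :: nat
    and Y :: "nat \<Rightarrow> nat set"
  assumes "M \<ge> 5 / 2"
    and "\<forall>i\<in>{1..n}. p i > 0"
    and "\<forall>i\<in>{1..n}. g i \<in> {1, 2}"
    and "opt_makespan p g n = 1"
    and "algA_run M p g n Y"
  shows "\<forall>j\<in>{1..n}. load1 p j (Y j) \<le> 1 + mu M"
proof
  fix j assume "j \<in> {1..n}"
  then have "j \<le> n" by simp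
  have nonneg: "\<forall>i\<in>{1..n}. 0 \<le> p i" using assms(2) by (simp add: less_imp_le)
  obtain S where "feasible_assignment g n S" and "makespan p n S = 1"
    using opt_makespan_attained assms(4) by metis
  then have S: "S \<subseteq> {i\<in>{1..n}. g i = 2}" and S_loads: "load1 p n S \<le> 1" "load2 p S \<le> 1"
    unfolding feasible_assignment_def makespan_def by auto
  have inv: "Y j \<subseteq> {i\<in>{1..j}. g i = 2}"
    "load2 p (Y j) < 1 - mu M \<longrightarrow> load1 p j (Y j) \<le> load1 p j S"
    using algA_run_invariant[OF assms(5) S S_loads(2) nonneg assms(3) \<open>j \<le> n\<close>] by auto
  have "mu M \<ge> 0" unfolding mu_def using assms(1) by simp
  moreover have "load1 p j S \<le> load1 p n S" using load1_mono[OF nonneg \<open>j \<le> n\<close>] .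
  moreover have "sum p {1..j} \<le> sum p {1..n}" by (rule sum_mono2) (use nonneg \<open>j \<le> n\<close> in auto)
  moreover have "load1 p n S = sum p {1..n} - load2 p S"
    by (rule load1_eq_sum_minus_load2) (use S in auto)
  moreover have "load1 p j (Y j) = sum p {1..j} - load2 p (Y j)"
    by (rule load1_eq_sum_minus_load2) (use inv(1) in auto)
  ultimately show "load1 p j (Y j) \<le> 1 + mu M" using inv(2) S_loads by linarith
qed

end
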